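(* $A\in \kappa\mathbf{CH}$ if and only if $\mathcal{BL}_\kappa(\mathrm{p}\mathcal{H} A) = A$.
   Context: Let $A$ be a meet-semilattice (in the paper, a bounded distributive lattice) and $\kappa$ a regular cardinal. A $\kappa$-join is a join of a set of cardinality $<\kappa$; $A$ is $\kappa$-complete if all $\kappa$-joins exist. $\kappa\mathbf{CH}$ is the class of $\kappa$-complete Heyting lattices. A join $\bigvee S$ existing in $A$ is distributive if $a\wedge\bigvee S=\bigvee\{a\wedge s: s\in S\}$ for all $a\in A$; $A$ is a $\kappa$-frame if it is $\kappa$-complete and every $\kappa$-join is distributive. $\mathcal{BL} A$ (the Bruns-Lakser completion) is the frame of D-ideals of $A$ (downsets closed under distributive joins of their subsets), with $A$ identified with its principal downsets. A relative annihilator of $A$ is $\langle a,b\rangle=\{x\in A: a\wedge x\le b\}$. The proHeyting extension $\mathrm{p}\mathcal{H} A$ is the bounded sublattice of $\mathcal{BL} A$ generated by the relative annihilators of $A$; one has $A\subseteq\mathrm{p}\mathcal{H} A\subseteq\mathcal{BL} A$ and $\mathcal{BL}(\mathrm{p}\mathcal{H} A)$ is identified with $\mathcal{BL} A$. For a meet-semilattice $B$ with $A\le B\le\mathcal{BL} A$, $\mathcal{BL}_\kappa B$ denotes the sub-$\kappa$-frame of $\mathcal{BL} A=\mathcal{BL} B$ generated by $B$. *)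

theory Defs
  imports Main
begin

unbundle cardinal_syntax

definition is_join :: "'a::lattice set \<Rightarrow> 'a \<Rightarrow> bool" where
  "is_join S s \<longleftrightarrow> (\<forall>x\<in>S. x \<le> s) \<and> (\<forall>y. (\<forall>x\<in>S. x \<le> y) \<longrightarrow> s \<le> y)"

definition is_dist_join :: "'a::lattice set \<Rightarrow> 'a \<Rightarrow> bool" where
  "is_dist_join S s \<longleftrightarrow> is_join S s \<and> (\<forall>a. is_join ((\<lambda>x. inf a x) ` S) (inf a s))"

definition kappa_complete :: "'k rel \<Rightarrow> 'a::lattice itself \<Rightarrow> bool" where
  "kappa_complete \<kappa> _ \<longleftrightarrow> (\<forall>S::'a set. |S| <o \<kappa> \<longrightarrow> (\<exists>s. is_join S s))"

definition heyting :: "'a::lattice itself \<Rightarrow> bool" where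
  "heyting _ \<longleftrightarrow> (\<forall>a b::'a. \<exists>c. \<forall>x. inf a x \<le> b \<longleftrightarrow> x \<le> c)"

definition kappaCH :: "'k rel \<Rightarrow> 'a::lattice itself \<Rightarrow> bool" where
  "kappaCH \<kappa> T \<longleftrightarrow> kappa_complete \<kappa> T \<and> heyting T"

definition D_ideal :: "'a::lattice set \<Rightarrow> bool" where
  "D_ideal I \<longleftrightarrow> (\<forall>x y. y \<in> I \<longrightarrow> x \<le> y \<longrightarrow> x \<in> I)
                 \<and> (\<forall>S s. S \<subseteq> I \<longrightarrow> is_dist_join S s \<longrightarrow> s \<in> I)"

definition BL :: "'a::lattice set set" where
  "BL = {I. D_ideal I}"

definition BL_Join :: "'a::lattice set set \<Rightarrow> 'a set" where
  "BL_Join F = \<Inter>{I. D_ideal I \<and> \<Union>F \<subseteq> I}"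

text \<open>Embedding of \<open>A\<close> into \<open>BL A\<close> via principal downsets.\<close>
definition principal :: "'a::lattice \<Rightarrow> 'a set" where
  "principal a = {x. x \<le> a}"

definition rel_ann :: "'a::lattice \<Rightarrow> 'a \<Rightarrow> 'a set" where
  "rel_ann a b = {x. inf a x \<le> b}"

text \<open>The proHeyting extension: the bounded sublattice of \<open>BL A\<close> generated by
  the relative annihilators (meets in \<open>BL A\<close> are intersections, top is \<open>UNIV\<close>,
  joins are \<open>BL_Join\<close>, bottom is \<open>BL_Join {}\<close>).\<close>
inductive_set pH :: "'a::lattice set set" where
  ann: "rel_ann a b \<in> pH"
| top: "UNIV \<in> pH"
| bot: "BL_Join {} \<in> pH"
| meet: "I \<in> pH \<Longrightarrow> J \<in> pH \<Longrightarrow> I \<inter> J \<in> pH"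
| join: "I \<in> pH \<Longrightarrow> J \<in> pH \<Longrightarrow> BL_Join {I, J} \<in> pH"

inductive_set BL_kappa :: "'k rel \<Rightarrow> 'a::lattice set set \<Rightarrow> 'a set set"
  for \<kappa> :: "'k rel" and B :: "'a set set" where
  gen: "I \<in> B \<Longrightarrow> I \<in> BL_kappa \<kappa> B"
| top: "UNIV \<in> BL_kappa \<kappa> B"
| meet: "I \<in> BL_kappa \<kappa> B \<Longrightarrow> J \<in> BL_kappa \<kappa> B \<Longrightarrow> I \<inter> J \<in> BL_kappa \<kappa> B"
| join: "(\<And>I. I \<in> F \<Longrightarrow> I \<in> BL_kappa \<kappa> B) \<Longrightarrow> |F| <o \<kappa> \<Longrightarrow> BL_Join F \<in> BL_kappa \<kappa> B"

end

theory Submission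
  imports Defs
begin

text \<open>Principal downsets are D-ideals, and the frame operations of \<open>BL A\<close> restrict to those
  of \<open>A\<close> on them: if the \<open>BL\<close>-join of the principal downsets of the elements of \<open>S\<close> is
  principal, it is generated by \<open>\<Squnion>S\<close>, and it is principal whenever \<open>\<Squnion>S\<close> is a distributive
  join. In a Heyting lattice every existing join is distributive and every relative
  annihilator \<open>\<langle>a, b\<rangle>\<close> is the principal downset of \<open>a \<rightarrow> b\<close>; hence if \<open>A\<close> is a
  \<open>\<kappa>\<close>-complete Heyting lattice, the principal downsets form a sub-\<open>\<kappa>\<close>-frame of \<open>BL A\<close>
  containing \<open>pH A\<close>, while \<open>pH A\<close> contains them as the annihilators \<open>\<langle>1, a\<rangle>\<close>. Conversely,
  if \<open>BL\<^sub>\<kappa>(pH A)\<close> consists of principal downsets, the relative annihilators are principal,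
  which gives Heyting implications, and \<open>BL\<close>-joins of fewer than \<open>\<kappa>\<close> principal downsets are
  principal, which gives \<open>\<kappa>\<close>-joins.\<close>

lemma principal_D_ideal: "D_ideal (principal a)"
  unfolding D_ideal_def principal_def is_dist_join_def is_join_def
  by (auto intro: order_trans)

lemma principal_inject: "principal a = principal b \<longleftrightarrow> a = b"
  by (auto simp: principal_def set_eq_iff intro: order.antisym)

lemma principal_top: "principal (top::'a::bounded_lattice) = UNIV"
  by (simp add: principal_def)

lemma principal_inf: "principal a \<inter> principal b = principal (inf a b)"
  by (auto simp: principal_def)

lemma rel_ann_top: "rel_ann top a = principal (a::'a::bounded_lattice)"
  by (simp add: rel_ann_def principal_def)

lemma rel_ann_eq_principal_iff:
  "rel_ann a b = principal c \<longleftrightarrow> (\<forall>x. inf a x \<le> b \<longleftrightarrow> x \<le> c)"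
  by (auto simp: rel_ann_def principal_def set_eq_iff)

lemma heyting_iff_rel_ann_principal:
  "heyting TYPE('a::lattice) \<longleftrightarrow> (\<forall>a b::'a. rel_ann a b \<in> range principal)"
  unfolding heyting_def by (simp add: image_iff rel_ann_eq_principal_iff)

lemma BL_Join_upper: "\<Union>F \<subseteq> BL_Join F"
  by (auto simp: BL_Join_def)

lemma BL_Join_least: "D_ideal I \<Longrightarrow> \<Union>F \<subseteq> I \<Longrightarrow> BL_Join F \<subseteq> I"
  by (auto simp: BL_Join_def)

lemma BL_Join_principal_le_iff:
  "BL_Join (principal ` S) \<subseteq> principal y \<longleftrightarrow> (\<forall>x\<in>S. x \<le> y)"
proof
  assume "BL_Join (principal ` S) \<subseteq> principal y"
  with BL_Join_upper[of "principal ` S"] show "\<forall>x\<in>S. x \<le> y"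
    by (auto simp: principal_def)
next
  assume "\<forall>x\<in>S. x \<le> y"
  then have "\<Union>(principal ` S) \<subseteq> principal y"
    by (auto simp: principal_def intro: order_trans)
  then show "BL_Join (principal ` S) \<subseteq> principal y"
    by (rule BL_Join_least[OF principal_D_ideal])
qed

lemma is_join_if_BL_Join_principal:
  assumes "BL_Join (principal ` S) = principal s"
  shows "is_join S s"
  using BL_Join_principal_le_iff[of S] unfolding assms is_join_def
  by (auto simp: principal_def)

lemma BL_Join_principal:
  assumes "is_dist_join S s"
  shows "BL_Join (principal ` S) = principal s"
proof
  show "BL_Join (principal ` S) \<subseteq> principal s"
    using assms by (simp add: BL_Join_principal_le_iff is_dist_join_def is_join_def)
  show "principal s \<subseteq> BL_Join (principal ` S)"
  proof
    fix x assume "x \<in> principal s"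
    have "x \<in> I" if "D_ideal I" and "\<Union>(principal ` S) \<subseteq> I" for I
    proof -
      from that(2) have "S \<subseteq> I"
        by (auto simp: principal_def)
      with that(1) assms have "s \<in> I"
        unfolding D_ideal_def by blast
      with that(1) \<open>x \<in> principal s\<close> show "x \<in> I"
        unfolding D_ideal_def principal_def by blast
    qed
    then show "x \<in> BL_Join (principal ` S)"
      by (simp add: BL_Join_def)
  qed
qed

lemma BL_Join_empty: "BL_Join {} = principal (bot::'a::bounded_lattice)"
proof -
  have "is_dist_join {} (bot::'a)"
    by (simp add: is_dist_join_def is_join_def)
  from BL_Join_principal[OF this] show ?thesis by simp
qed

lemma BL_Join_principal_pair:
  "BL_Join {principal a, principal b} = principal (sup a (b::'a::distrib_lattice))"
proof -
  have "is_dist_join {a, b} (sup a b)"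
    by (simp add: is_dist_join_def is_join_def inf_sup_distrib1)
  from BL_Join_principal[OF this] show ?thesis by simp
qed

lemma heyting_is_dist_join:
  assumes "heyting TYPE('a::lattice)" and "is_join S (s::'a)"
  shows "is_dist_join S s"
  unfolding is_dist_join_def
proof (intro conjI allI)
  fix a
  show "is_join ((\<lambda>x. inf a x) ` S) (inf a s)"
    unfolding is_join_def
  proof (intro conjI allI impI ballI)
    fix z assume "z \<in> (\<lambda>x. inf a x) ` S"
    with \<open>is_join S s\<close> show "z \<le> inf a s"
      by (auto simp: is_join_def intro: le_infI2)
  next
    fix y assume y: "\<forall>z\<in>(\<lambda>x. inf a x) ` S. z \<le> y"
    obtain c where c: "\<And>x. inf a x \<le> y \<longleftrightarrow> x \<le> c"
      using \<open>heyting TYPE('a)\<close> unfolding heyting_def by blast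
    with y \<open>is_join S s\<close> have "s \<le> c" by (auto simp: is_join_def)
    with c show "inf a s \<le> y" by blast
  qed
qed (fact assms)

lemma kappa_complete_iff_BL_Join_principal:
  "kappa_complete \<kappa> TYPE('a::lattice) \<longleftrightarrow>
     (\<forall>S::'a set. |S| <o \<kappa> \<longrightarrow> BL_Join (principal ` S) \<in> range principal)"
  if "heyting TYPE('a)"
  unfolding kappa_complete_def
  using BL_Join_principal heyting_is_dist_join[OF that] is_join_if_BL_Join_principal
  by (metis rangeE rangeI)

lemma small_subset_range_principal:
  assumes "F \<subseteq> range principal" and "|F| <o \<kappa>"
  obtains S where "F = principal ` S" and "|S| <o \<kappa>"
proof
  show "F = principal ` (principal -` F)"
    using assms(1) by auto
  have "|principal -` F| \<le>o |F|"
    unfolding card_of_ordLeq[symmetric]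
    by (rule exI[of _ principal]) (auto simp: inj_on_def principal_inject)
  then show "|principal -` F| <o \<kappa>"
    using assms(2) by (rule ordLeq_ordLess_trans)
qed

lemma pH_subset_range_principal:
  assumes "heyting TYPE('a::{distrib_lattice, bounded_lattice})"
  shows "(pH :: 'a set set) \<subseteq> range principal"
proof
  fix I :: "'a set" assume "I \<in> pH"
  then show "I \<in> range principal"
  proof induct
    case (ann a b)
    then show ?case using assms by (simp add: heyting_iff_rel_ann_principal)
  next
    case top
    show ?case by (metis principal_top rangeI)
  next
    case bot
    show ?case by (simp add: BL_Join_empty)
  next
    case (meet I J)
    then show ?case by (auto simp: principal_inf)
  next
    case (join I J)
    then show ?case by (auto simp: BL_Join_principal_pair)
  qed
qed

lemma range_principal_subset_pH:
  "range principal \<subseteq> (pH :: 'a::bounded_lattice set set)"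
  by (metis image_subsetI pH.ann rel_ann_top)

lemma BL_kappa_subset_range_principal:
  assumes "kappaCH \<kappa> TYPE('a::bounded_lattice)" and "B \<subseteq> range principal"
  shows "BL_kappa \<kappa> B \<subseteq> range (principal :: 'a \<Rightarrow> 'a set)"
proof
  from assms(1) have heyting: "heyting TYPE('a)" and complete: "kappa_complete \<kappa> TYPE('a)"
    by (simp_all add: kappaCH_def)
  fix I assume "I \<in> BL_kappa \<kappa> B"
  then show "I \<in> range principal"
  proof induct
    case (join F)
    then obtain S where "F = principal ` S" and "|S| <o \<kappa>"
      by (meson small_subset_range_principal subsetI)
    with complete show ?case
      by (simp add: kappa_complete_iff_BL_Join_principal[OF heyting])
  next
    case (gen I)
    with assms(2) show ?case by blast
  next
    case top
    show ?case by (metis principal_top rangeI)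
  next
    case (meet I J)
    then show ?case by (auto simp: principal_inf)
  qed
qed

lemma BL_Join_principal_in_range_if_BL_kappa_eq:
  fixes S :: "'a::lattice set" and B :: "'a set set"
  assumes "BL_kappa \<kappa> B = range principal" and "|S| <o \<kappa>"
  shows "BL_Join (principal ` S) \<in> range principal"
proof -
  have "|principal ` S| <o \<kappa>"
    using card_of_image assms(2) by (rule ordLeq_ordLess_trans)
  then have "BL_Join (principal ` S) \<in> BL_kappa \<kappa> B"
    by (rule BL_kappa.join[rotated]) (auto simp: assms(1))
  then show ?thesis
    by (simp add: assms(1))
qed

theorem theorem4p19:
  fixes \<kappa> :: "'k rel"
  assumes "Cinfinite \<kappa>" and "regularCard \<kappa>"
  shows "kappaCH \<kappa> TYPE('a::{distrib_lattice, bounded_lattice})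
         \<longleftrightarrow> BL_kappa \<kappa> (pH :: 'a set set) = range principal"
  \<comment> \<open>The argument works for any relation \<open>\<kappa>\<close>.\<close>
proof
  assume "kappaCH \<kappa> TYPE('a)"
  then have "pH \<subseteq> range (principal :: 'a \<Rightarrow> 'a set)"
    by (simp add: kappaCH_def pH_subset_range_principal)
  with \<open>kappaCH \<kappa> TYPE('a)\<close> have "BL_kappa \<kappa> pH \<subseteq> range (principal :: 'a \<Rightarrow> 'a set)"
    by (rule BL_kappa_subset_range_principal)
  moreover have "range principal \<subseteq> BL_kappa \<kappa> (pH :: 'a set set)"
    using range_principal_subset_pH by (blast intro: BL_kappa.gen)
  ultimately show "BL_kappa \<kappa> (pH :: 'a set set) = range principal" by (rule equalityI)
next
  assume closed: "BL_kappa \<kappa> (pH :: 'a set set) = range principal"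
  have "heyting TYPE('a)"
    unfolding heyting_iff_rel_ann_principal closed[symmetric]
    by (blast intro: BL_kappa.gen pH.ann)
  moreover have "kappa_complete \<kappa> TYPE('a)"
    using BL_Join_principal_in_range_if_BL_kappa_eq[OF closed]
    by (simp add: kappa_complete_iff_BL_Join_principal[OF \<open>heyting TYPE('a)\<close>])
  ultimately show "kappaCH \<kappa> TYPE('a)" by (simp add: kappaCH_def)
qed

end
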